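(* Let $d_1,d_2\ge2$ and let $\rho_{12}$ be a (possibly mixed) density operator on $\mathbb{C}^{d_1}\otimes\mathbb{C}^{d_2}$. Write $t_{u_1,u_2}=\operatorname{tr}\big(\rho_{12}\,(A^{(1)}_{u_1})^{\dagger}\otimes(A^{(2)}_{u_2})^{\dagger}\big)$ for $0\le u_s\le d_s^2-1$, so that $\rho_{12}=\frac{1}{d_1d_2}\sum_{u_1,u_2}t_{u_1,u_2}A^{(1)}_{u_1}\otimes A^{(2)}_{u_2}$, and let $T^{(12)}$ be the vector with entries $t_{u_1,u_2}$ for $u_1\ne0$, $u_2\ne0$. Then $$\|T^{(12)}\|^2\le d_1d_2\Big(1-\frac{1}{d_1^2}-\frac{1}{d_2^2}\Big)+1.$$
   Context: Generalized Pauli operators: for an integer $d\ge2$, let $\omega$ be a fixed primitive $d$-th root of unity and let $E_{m,j}$ ($0\le m,j\le d-1$) be the $d\times d$ matrix units, with indices taken modulo $d$. Each $u\in\{0,\dots,d^2-1\}$ is written uniquely as $u=di+j$ with $0\le i,j\le d-1$, and one sets $A_u=A_{di+j}=\sum_{m=0}^{d-1}\omega^{im}E_{m,m+j}$. Thus $A_0=I_d$ and $\operatorname{tr}(A_uA_v^{\dagger})=d\,\delta_{uv}$. $A^{(s)}_u$ denotes these operators for $d=d_s$. For a complex vector $v$, $\|v\|=\sqrt{v^{\dagger}v}$. *)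

theory Defs
  imports Complex_Main
begin

text \<open>Square complex matrices of size n are represented as functions
  nat \<Rightarrow> nat \<Rightarrow> complex; only the entries with both indices below n matter.
  Indices of C^{d1} \<otimes> C^{d2} are encoded as a1 * d2 + a2 with a1 < d1, a2 < d2.\<close>

definition primitive_root :: "nat \<Rightarrow> complex \<Rightarrow> bool" where
  "primitive_root d w \<longleftrightarrow> w ^ d = 1 \<and> (\<forall>k. 0 < k \<and> k < d \<longrightarrow> w ^ k \<noteq> 1)"

text \<open>Generalized Pauli operator A_u = A_{d i + j} = sum_m w^(i m) E_{m, m+j}.\<close>
definition gpauli :: "nat \<Rightarrow> complex \<Rightarrow> nat \<Rightarrow> nat \<Rightarrow> nat \<Rightarrow> complex" where
  "gpauli d w u m n = (if m < d \<and> n < d \<and> n = (m + u mod d) mod d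
                        then w ^ ((u div d) * m) else 0)"

definition kron :: "nat \<Rightarrow> nat \<Rightarrow> (nat \<Rightarrow> nat \<Rightarrow> complex) \<Rightarrow> (nat \<Rightarrow> nat \<Rightarrow> complex)
                     \<Rightarrow> nat \<Rightarrow> nat \<Rightarrow> complex" where
  "kron d1 d2 A B r c = (if r < d1 * d2 \<and> c < d1 * d2
     then A (r div d2) (c div d2) * B (r mod d2) (c mod d2) else 0)"

definition adj :: "(nat \<Rightarrow> nat \<Rightarrow> complex) \<Rightarrow> nat \<Rightarrow> nat \<Rightarrow> complex" where
  "adj A r c = cnj (A c r)"

definition mmult :: "nat \<Rightarrow> (nat \<Rightarrow> nat \<Rightarrow> complex) \<Rightarrow> (nat \<Rightarrow> nat \<Rightarrow> complex)
                      \<Rightarrow> nat \<Rightarrow> nat \<Rightarrow> complex" where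
  "mmult n A B r c = (\<Sum>k<n. A r k * B k c)"

definition mtrace :: "nat \<Rightarrow> (nat \<Rightarrow> nat \<Rightarrow> complex) \<Rightarrow> complex" where
  "mtrace n A = (\<Sum>k<n. A k k)"

definition density_op :: "nat \<Rightarrow> (nat \<Rightarrow> nat \<Rightarrow> complex) \<Rightarrow> bool" where
  "density_op n \<rho> \<longleftrightarrow>
     (\<forall>r<n. \<forall>c<n. \<rho> r c = cnj (\<rho> c r)) \<and>
     (\<forall>v :: nat \<Rightarrow> complex. 0 \<le> Re (\<Sum>r<n. \<Sum>c<n. cnj (v r) * \<rho> r c * v c)) \<and>
     mtrace n \<rho> = 1"

definition corr :: "nat \<Rightarrow> nat \<Rightarrow> complex \<Rightarrow> complex \<Rightarrow> (nat \<Rightarrow> nat \<Rightarrow> complex)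
                     \<Rightarrow> nat \<Rightarrow> nat \<Rightarrow> complex" where
  "corr d1 d2 w1 w2 \<rho> u1 u2 =
     mtrace (d1 * d2) (mmult (d1 * d2) \<rho>
        (kron d1 d2 (adj (gpauli d1 w1 u1)) (adj (gpauli d2 w2 u2))))"

end

theory Submission
  imports Defs "HOL-Analysis.Analysis"
begin

text \<open>The generalized Pauli operators satisfy the completeness relation of an orthogonal
  basis, so by Parseval the squared correlations summed over all (u1, u2) give d1 d2 tr(rho^2),
  summed over u1 = 0 they give d2 tr(rho_2^2), summed over u2 = 0 they give d1 tr(rho_1^2), and
  t_00 = tr rho = 1. Hence the squared norm of T12 equals
  d1 d2 tr(rho^2) - d2 tr(rho_2^2) - d1 tr(rho_1^2) + 1.
  Factorising the positive semidefinite rho as a sum of rank-one terms x_k x_k^*, the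
  Cauchy-Schwarz inequality gives tr(rho^2) <= d1 tr(rho_2^2), tr(rho^2) <= d2 tr(rho_1^2) and
  tr(rho^2) <= (tr rho)^2 = 1, and these three bounds give the claim.\<close>

section \<open>Positive semidefinite matrices and their Gram factorisation\<close>

definition hermitian :: "nat \<Rightarrow> (nat \<Rightarrow> nat \<Rightarrow> complex) \<Rightarrow> bool" where
  "hermitian n A \<longleftrightarrow> (\<forall>r<n. \<forall>c<n. A r c = cnj (A c r))"

definition qform :: "nat \<Rightarrow> (nat \<Rightarrow> nat \<Rightarrow> complex) \<Rightarrow> (nat \<Rightarrow> complex) \<Rightarrow> complex" where
  "qform n A v = (\<Sum>r<n. \<Sum>c<n. cnj (v r) * A r c * v c)"

definition pos_semidef :: "nat \<Rightarrow> (nat \<Rightarrow> nat \<Rightarrow> complex) \<Rightarrow> bool" where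
  "pos_semidef n A \<longleftrightarrow> (\<forall>v. 0 \<le> Re (qform n A v))"

lemma hermitianD: "hermitian n A \<Longrightarrow> r < n \<Longrightarrow> c < n \<Longrightarrow> A r c = cnj (A c r)"
  unfolding hermitian_def by blast

lemma density_op_iff:
  "density_op n \<rho> \<longleftrightarrow> hermitian n \<rho> \<and> pos_semidef n \<rho> \<and> mtrace n \<rho> = 1"
  by (simp add: density_op_def hermitian_def pos_semidef_def qform_def)

lemma sum_mult_delta_right:
  "(p::nat) < n \<Longrightarrow> (\<Sum>c<n. f c * (if c = p then t else 0)) = f p * (t::'a::semiring_0)"
  by (simp add: if_distrib[of "times _"] sum.delta cong: if_cong)

lemma sum_delta_mult_left:
  "(p::nat) < n \<Longrightarrow> (\<Sum>c<n. (if c = p then t else 0) * f c) = (t::'a::semiring_0) * f p"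
  by (simp add: if_distrib[of "\<lambda>x. x * _"] cong: if_cong)

lemma qform_add_unit:
  assumes "p < n"
  shows "qform n A (\<lambda>i. v i + (if i = p then t else 0)) =
    qform n A v + t * (\<Sum>r<n. cnj (v r) * A r p) + cnj t * (\<Sum>c<n. A p c * v c) + cnj t * t * A p p"
proof -
  let ?e = "\<lambda>i. if i = p then t else 0"
  have "qform n A (\<lambda>i. v i + ?e i) = qform n A v + (\<Sum>r<n. \<Sum>c<n. (cnj (v r) * A r c) * ?e c)
      + (\<Sum>r<n. (\<Sum>c<n. A r c * v c) * cnj (?e r)) + (\<Sum>r<n. (\<Sum>c<n. A r c * ?e c) * cnj (?e r))"
    by (simp add: qform_def algebra_simps sum.distrib sum_distrib_left sum_distrib_right)
  also have "(\<Sum>r<n. \<Sum>c<n. (cnj (v r) * A r c) * ?e c) = t * (\<Sum>r<n. cnj (v r) * A r p)"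
    by (simp only: sum_mult_delta_right[OF assms] flip: sum_distrib_right) (simp add: mult.commute)
  also have "(\<Sum>r<n. (\<Sum>c<n. A r c * v c) * cnj (?e r)) = cnj t * (\<Sum>c<n. A p c * v c)"
    by (simp only: if_distrib[of cnj] complex_cnj_zero sum_mult_delta_right[OF assms] sum_delta_mult_left[OF assms] mult.commute)
  also have "(\<Sum>r<n. (\<Sum>c<n. A r c * ?e c) * cnj (?e r)) = cnj t * t * A p p"
    by (simp only: if_distrib[of cnj] complex_cnj_zero sum_mult_delta_right[OF assms]) (simp add: mult_ac)
  finally show ?thesis .
qed

lemma qform_unit:
  "p < n \<Longrightarrow> qform n A (\<lambda>i. if i = p then t else 0) = cnj t * t * A p p"
  using qform_add_unit[of p n A "\<lambda>_. 0" t] by (simp add: qform_def)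

lemma hermitian_diag_real: "hermitian n A \<Longrightarrow> p < n \<Longrightarrow> A p p = of_real (Re (A p p))"
  unfolding hermitian_def by (metis Reals_cnj_iff complex_cnj_cnj of_real_Re)

lemma pos_semidef_diag_nonneg: "pos_semidef n A \<Longrightarrow> p < n \<Longrightarrow> 0 \<le> Re (A p p)"
  using qform_unit[of p n A 1] unfolding pos_semidef_def by (metis mult_1 complex_cnj_one)

text \<open>If A p p = 0 but A p c \<noteq> 0, the form at e_c - l A p c e_p is A c c - 2 l |A p c|^2,
  which is negative for large l.\<close>
lemma pos_semidef_zero_diag_row:
  assumes H: "hermitian n A" and P: "pos_semidef n A" and "p < n" "c < n" and "A p p = 0"
  shows "A p c = 0"
proof (rule ccontr)
  define s where "s = A p c"
  assume "A p c \<noteq> 0"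
  then have s0: "0 < (cmod s)\<^sup>2" by (simp add: s_def)
  define e where "e = (\<lambda>i. if i = c then 1 else 0 :: complex)"
  define l where "l = (Re (A c c) + 1) / (2 * (cmod s)\<^sup>2)"
  define t where "t = - of_real l * s"
  have "qform n A e = A c c" using \<open>c < n\<close> by (simp add: e_def qform_unit)
  moreover have "(\<Sum>r<n. cnj (e r) * A r p) = cnj s"
  proof -
    have "cnj (e r) = e r" for r by (simp add: e_def)
    then have "(\<Sum>r<n. cnj (e r) * A r p) = (\<Sum>r<n. (if r = c then 1 else 0) * A r p)"
      by (simp add: e_def)
    also have "\<dots> = 1 * A c p" using \<open>c < n\<close> by (rule sum_delta_mult_left)
    finally show ?thesis using hermitianD[OF H \<open>c < n\<close> \<open>p < n\<close>] by (simp add: s_def)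
  qed
  moreover have "(\<Sum>i<n. A p i * e i) = s"
    using sum_mult_delta_right[OF \<open>c < n\<close>, of "A p" 1] by (simp add: e_def s_def)
  moreover have "t * cnj s = - of_real (l * (cmod s)\<^sup>2)" "cnj t * s = - of_real (l * (cmod s)\<^sup>2)"
    unfolding t_def of_real_mult complex_norm_square by (simp_all add: mult_ac)
  ultimately have "qform n A (\<lambda>i. e i + (if i = p then t else 0)) = A c c - 2 * of_real (l * (cmod s)\<^sup>2)"
    using \<open>A p p = 0\<close> by (simp add: qform_add_unit[OF \<open>p < n\<close>])
  moreover have "Re (A c c) - 2 * (l * (cmod s)\<^sup>2) = -1"
    using s0 by (simp add: l_def field_simps)
  ultimately have "Re (qform n A (\<lambda>i. e i + (if i = p then t else 0))) = -1"
    by simp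
  moreover have "0 \<le> Re (qform n A (\<lambda>i. e i + (if i = p then t else 0)))"
    using P by (simp add: pos_semidef_def)
  ultimately show False by simp
qed

text \<open>The Schur complement of the pivot entry A p p. When A p p = 0 the division by zero
  makes it A itself.\<close>
definition deflate :: "(nat \<Rightarrow> nat \<Rightarrow> complex) \<Rightarrow> nat \<Rightarrow> nat \<Rightarrow> nat \<Rightarrow> complex" where
  "deflate A p r c = A r c - A r p * A p c / A p p"

lemma hermitian_deflate:
  assumes H: "hermitian n A" and p: "p < n"
  shows "hermitian n (deflate A p)"
  unfolding hermitian_def
proof (intro allI impI)
  fix r c assume "r < n" "c < n"
  moreover have "cnj (A p p) = A p p" using hermitianD[OF H p p] by (rule sym)
  ultimately show "deflate A p r c = cnj (deflate A p c r)"
    using hermitianD[OF H \<open>r < n\<close> \<open>c < n\<close>] hermitianD[OF H \<open>r < n\<close> p] hermitianD[OF H p \<open>c < n\<close>]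
    by (simp add: deflate_def mult.commute)
qed

lemma qform_deflate:
  "qform n (deflate A p) v = qform n A v - (\<Sum>r<n. cnj (v r) * A r p) * (\<Sum>c<n. A p c * v c) / A p p"
proof -
  have "cnj (v r) * deflate A p r c * v c
      = cnj (v r) * A r c * v c - (cnj (v r) * A r p) * (A p c * v c) / A p p" for r c
    by (simp add: deflate_def divide_inverse algebra_simps)
  then show ?thesis
    unfolding qform_def sum_product by (simp add: sum_subtractf sum_divide_distrib)
qed

lemma pos_semidef_deflate:
  assumes H: "hermitian n A" and P: "pos_semidef n A" and p: "p < n"
  shows "pos_semidef n (deflate A p)"
proof (cases "A p p = 0")
  case True
  then have "deflate A p = A" by (simp add: deflate_def fun_eq_iff)
  then show ?thesis using P by simp
next
  case False
  have a: "cnj (A p p) = A p p" using hermitianD[OF H p p] by (rule sym)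
  show ?thesis unfolding pos_semidef_def
  proof
    fix v
    define s where "s = (\<Sum>c<n. A p c * v c)"
    define t where "t = - s / A p p"
    have "cnj (v r) * A r p = cnj (A p r * v r)" if "r < n" for r
      using hermitianD[OF H that p] by (simp add: mult.commute)
    then have cs: "(\<Sum>r<n. cnj (v r) * A r p) = cnj s"
      unfolding s_def cnj_sum by (intro sum.cong) auto
    define q where "q = cnj s * s / A p p"
    have "cnj t = - cnj s / A p p" using a by (simp add: t_def)
    then have tq: "t * cnj s = - q" "cnj t * s = - q" "cnj t * t * A p p = q"
      using False by (simp_all add: t_def q_def)
    have "qform n A (\<lambda>i. v i + (if i = p then t else 0))
        = qform n A v + t * cnj s + cnj t * s + cnj t * t * A p p"
      unfolding qform_add_unit[OF p] cs s_def ..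
    also have "\<dots> = qform n A v - q" unfolding tq by simp
    also have "\<dots> = qform n (deflate A p) v"
      unfolding qform_deflate cs q_def s_def ..
    finally show "0 \<le> Re (qform n (deflate A p) v)"
      using P by (metis pos_semidef_def)
  qed
qed

lemma deflate_pivot_zero:
  assumes H: "hermitian n A" and P: "pos_semidef n A" and "p < n" "c < n"
  shows "deflate A p p c = 0" and "deflate A p c p = 0"
proof -
  have "deflate A p p c = 0 \<and> deflate A p c p = 0"
  proof (cases "A p p = 0")
    case True
    then have "A p c = 0" using pos_semidef_zero_diag_row[OF H P assms(3,4)] by blast
    moreover have "A c p = cnj (A p c)" using hermitianD[OF H assms(4,3)] .
    ultimately show ?thesis using True by (simp add: deflate_def)
  qed (simp add: deflate_def)
  then show "deflate A p p c = 0" and "deflate A p c p = 0" by blast+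
qed

lemma deflate_rank_one:
  assumes H: "hermitian n A" and P: "pos_semidef n A" and "p < n" "r < n" "c < n"
  defines "y \<equiv> \<lambda>r. A r p / of_real (sqrt (Re (A p p)))"
  shows "A r c = deflate A p r c + y r * cnj (y c)"
proof -
  have "of_real (sqrt (Re (A p p))) * of_real (sqrt (Re (A p p))) = (of_real (Re (A p p)) :: complex)"
    using pos_semidef_diag_nonneg[OF P \<open>p < n\<close>] by (simp flip: of_real_mult)
  also have "\<dots> = A p p" using hermitian_diag_real[OF H \<open>p < n\<close>] by (rule sym)
  finally have "of_real (sqrt (Re (A p p))) * of_real (sqrt (Re (A p p))) = A p p" .
  moreover have "cnj (A c p) = A p c" using hermitianD[OF H assms(3,5)] by simp
  ultimately have "y r * cnj (y c) = A r p * A p c / A p p"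
    unfolding y_def complex_cnj_divide complex_cnj_complex_of_real times_divide_times_eq by simp
  then show ?thesis by (simp add: deflate_def)
qed

lemma deflate_support:
  assumes H: "hermitian n A" and P: "pos_semidef n A" and p: "p < n"
    and A: "\<And>r c. r < n \<Longrightarrow> c < n \<Longrightarrow> r \<notin> insert p S \<or> c \<notin> insert p S \<Longrightarrow> A r c = 0"
    and "r < n" "c < n" "r \<notin> S \<or> c \<notin> S"
  shows "deflate A p r c = 0"
proof (cases "r = p \<or> c = p")
  case True
  then show ?thesis using deflate_pivot_zero[OF H P p] assms(5,6) by auto
next
  case False
  then have "A r c = 0" and "A r p = 0 \<or> A p c = 0"
    using A assms(5-7) p by auto
  then show ?thesis by (auto simp: deflate_def)
qed

text \<open>Split off one pivot at a time: A = deflate A p + y y^*, and deflate A p is again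
  positive semidefinite and vanishes on row and column p.\<close>
lemma gram_factorization_on:
  assumes "finite S" "S \<subseteq> {..<n}" "hermitian n A" "pos_semidef n A"
    and "\<And>r c. r < n \<Longrightarrow> c < n \<Longrightarrow> r \<notin> S \<or> c \<notin> S \<Longrightarrow> A r c = 0"
  shows "\<exists>x. \<forall>r<n. \<forall>c<n. A r c = (\<Sum>k\<in>S. x k r * cnj (x k c))"
  using assms
proof (induction S arbitrary: A rule: finite_induct)
  case empty
  then show ?case by auto
next
  case (insert p S)
  have H: "hermitian n A" and P: "pos_semidef n A" and p: "p < n"
    using insert.prems by auto
  have "\<exists>x. \<forall>r<n. \<forall>c<n. deflate A p r c = (\<Sum>k\<in>S. x k r * cnj (x k c))"
  proof (rule insert.IH)
    show "S \<subseteq> {..<n}" using insert.prems(1) by simp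
    show "hermitian n (deflate A p)" using hermitian_deflate[OF H p] .
    show "pos_semidef n (deflate A p)" using pos_semidef_deflate[OF H P p] .
    show "deflate A p r c = 0" if "r < n" "c < n" "r \<notin> S \<or> c \<notin> S" for r c
      using deflate_support[OF H P p insert.prems(4) that] .
  qed
  then obtain x where x: "\<forall>r<n. \<forall>c<n. deflate A p r c = (\<Sum>k\<in>S. x k r * cnj (x k c))"
    by blast
  define y where "y = (\<lambda>r. A r p / of_real (sqrt (Re (A p p))))"
  have "A r c = (\<Sum>k\<in>insert p S. (x(p := y)) k r * cnj ((x(p := y)) k c))"
    if "r < n" "c < n" for r c
  proof -
    have "(\<Sum>k\<in>S. (x(p := y)) k r * cnj ((x(p := y)) k c)) = (\<Sum>k\<in>S. x k r * cnj (x k c))"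
      using insert.hyps(2) by (intro sum.cong) auto
    then show ?thesis
      using deflate_rank_one[OF H P p that] x that insert.hyps by (simp add: y_def add.commute)
  qed
  then show ?case by blast
qed

lemma gram_factorization:
  assumes "hermitian n A" "pos_semidef n A"
  shows "\<exists>x. \<forall>r<n. \<forall>c<n. A r c = (\<Sum>k<n. x k r * cnj (x k c))"
  using gram_factorization_on[of "{..<n}" n A] assms by auto

section \<open>Purity bounds\<close>

lemma sum_norm_sq_gram_swap:
  "(\<Sum>p\<in>P. \<Sum>q\<in>P. (cmod (\<Sum>k\<in>K. x k p * cnj (x k q)))\<^sup>2)
   = (\<Sum>k\<in>K. \<Sum>l\<in>K. (cmod (\<Sum>p\<in>P. x k p * cnj (x l p)))\<^sup>2)"
proof -
  define F where "F p q k l = x k p * cnj (x k q) * (cnj (x l p) * x l q)" for p q k l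
  have "complex_of_real (\<Sum>p\<in>P. \<Sum>q\<in>P. (cmod (\<Sum>k\<in>K. x k p * cnj (x k q)))\<^sup>2)
      = (\<Sum>p\<in>P. \<Sum>q\<in>P. \<Sum>k\<in>K. \<Sum>l\<in>K. F p q k l)"
    by (simp add: F_def of_real_sum complex_norm_square cnj_sum sum_product mult_ac del: of_real_power)
  also have "\<dots> = (\<Sum>k\<in>K. \<Sum>l\<in>K. \<Sum>p\<in>P. \<Sum>q\<in>P. F p q k l)"
  proof -
    have "(\<Sum>p\<in>P. \<Sum>q\<in>P. \<Sum>k\<in>K. \<Sum>l\<in>K. F p q k l) = (\<Sum>k\<in>K. \<Sum>p\<in>P. \<Sum>q\<in>P. \<Sum>l\<in>K. F p q k l)"
      by (subst sum.swap) (simp only: sum.swap[of _ P K])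
    also have "\<dots> = (\<Sum>k\<in>K. \<Sum>l\<in>K. \<Sum>p\<in>P. \<Sum>q\<in>P. F p q k l)"
      by (simp only: sum.swap[of _ P K])
    finally show ?thesis .
  qed
  also have "\<dots> = complex_of_real (\<Sum>k\<in>K. \<Sum>l\<in>K. (cmod (\<Sum>p\<in>P. x k p * cnj (x l p)))\<^sup>2)"
    by (simp add: F_def of_real_sum complex_norm_square cnj_sum sum_product mult_ac del: of_real_power)
  finally show ?thesis by (simp only: of_real_eq_iff)
qed

lemma cmod_sum_mult_cnj_sq_le:
  "(cmod (\<Sum>i\<in>I. a i * cnj (b i)))\<^sup>2 \<le> (\<Sum>i\<in>I. (cmod (a i))\<^sup>2) * (\<Sum>i\<in>I. (cmod (b i))\<^sup>2)"
proof -
  have "cmod (\<Sum>i\<in>I. a i * cnj (b i)) \<le> (\<Sum>i\<in>I. cmod (a i) * cmod (b i))"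
    by (rule order_trans[OF norm_sum]) (simp add: norm_mult)
  then have "(cmod (\<Sum>i\<in>I. a i * cnj (b i)))\<^sup>2 \<le> (\<Sum>i\<in>I. cmod (a i) * cmod (b i))\<^sup>2"
    by (rule power_mono) simp
  also have "\<dots> \<le> (\<Sum>i\<in>I. (cmod (a i))\<^sup>2) * (\<Sum>i\<in>I. (cmod (b i))\<^sup>2)"
    by (rule Cauchy_Schwarz_ineq_sum)
  finally show ?thesis .
qed

lemma cmod_sum_sq_le_card: "(cmod (\<Sum>i\<in>I. z i))\<^sup>2 \<le> card I * (\<Sum>i\<in>I. (cmod (z i))\<^sup>2)"
  using cmod_sum_mult_cnj_sq_le[of z "\<lambda>_. 1" I] by (simp add: mult.commute)

lemma sum_norm_sq_gram_le_sq:
  "(\<Sum>k\<in>K. \<Sum>l\<in>K. (cmod (\<Sum>p\<in>P. x k p * cnj (x l p)))\<^sup>2) \<le> (\<Sum>k\<in>K. \<Sum>p\<in>P. (cmod (x k p))\<^sup>2)\<^sup>2"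
proof -
  have "(\<Sum>k\<in>K. \<Sum>l\<in>K. (cmod (\<Sum>p\<in>P. x k p * cnj (x l p)))\<^sup>2)
      \<le> (\<Sum>k\<in>K. \<Sum>l\<in>K. (\<Sum>p\<in>P. (cmod (x k p))\<^sup>2) * (\<Sum>p\<in>P. (cmod (x l p))\<^sup>2))"
    by (intro sum_mono cmod_sum_mult_cnj_sq_le)
  also have "\<dots> = (\<Sum>k\<in>K. \<Sum>p\<in>P. (cmod (x k p))\<^sup>2)\<^sup>2"
    by (simp add: power2_eq_square sum_product)
  finally show ?thesis .
qed

text \<open>For rho = sum_k x_k x_k^* on C^I (x) C^A this is tr(rho^2) <= card I * tr(rho_A^2).\<close>
lemma sum_norm_sq_gram_le_partial:
  fixes x :: "'k \<Rightarrow> 'i \<Rightarrow> 'a \<Rightarrow> complex"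
  assumes "finite I"
  shows "(\<Sum>k\<in>K. \<Sum>l\<in>K. (cmod (\<Sum>i\<in>I. \<Sum>a\<in>A. x k i a * cnj (x l i a)))\<^sup>2)
    \<le> card I * (\<Sum>a\<in>A. \<Sum>b\<in>A. (cmod (\<Sum>i\<in>I. \<Sum>k\<in>K. x k i a * cnj (x k i b)))\<^sup>2)"
proof -
  define g where "g k l i j = (cmod (\<Sum>a\<in>A. x k i a * cnj (x l j a)))\<^sup>2" for k l i j
  have "(\<Sum>k\<in>K. \<Sum>l\<in>K. (cmod (\<Sum>i\<in>I. \<Sum>a\<in>A. x k i a * cnj (x l i a)))\<^sup>2)
      \<le> (\<Sum>k\<in>K. \<Sum>l\<in>K. card I * (\<Sum>i\<in>I. g k l i i))"
    unfolding g_def by (intro sum_mono cmod_sum_sq_le_card)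
  also have "\<dots> \<le> (\<Sum>k\<in>K. \<Sum>l\<in>K. card I * (\<Sum>i\<in>I. \<Sum>j\<in>I. g k l i j))"
    using assms by (intro sum_mono mult_left_mono member_le_sum) (auto simp: g_def)
  also have "\<dots> = card I * (\<Sum>m\<in>K \<times> I. \<Sum>m'\<in>K \<times> I. g (fst m) (fst m') (snd m) (snd m'))"
    by (simp add: sum_distrib_left sum.cartesian_product' sum.swap[of _ K I])
  also have "\<dots> = card I * (\<Sum>a\<in>A. \<Sum>b\<in>A. (cmod (\<Sum>m\<in>K \<times> I. x (fst m) (snd m) a * cnj (x (fst m) (snd m) b)))\<^sup>2)"
    unfolding g_def by (subst sum_norm_sq_gram_swap) (rule refl)
  also have "\<dots> = card I * (\<Sum>a\<in>A. \<Sum>b\<in>A. (cmod (\<Sum>i\<in>I. \<Sum>k\<in>K. x k i a * cnj (x k i b)))\<^sup>2)"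
    by (simp add: sum.cartesian_product' sum.swap[of _ K I])
  finally show ?thesis .
qed

definition frobenius_sq :: "nat \<Rightarrow> (nat \<Rightarrow> nat \<Rightarrow> complex) \<Rightarrow> real" where
  "frobenius_sq n X = (\<Sum>r<n. \<Sum>c<n. (cmod (X r c))\<^sup>2)"

text \<open>The index a + i * d2 of C^d1 (x) C^d2 stands for e_i (x) e_a. Thus block d2 X i j
  is the (i, j) block of X, and reduced1 and reduced2 are the partial traces over the second
  and the first factor (the paper's rho_1 and rho_2).\<close>
definition block :: "nat \<Rightarrow> (nat \<Rightarrow> nat \<Rightarrow> complex) \<Rightarrow> nat \<Rightarrow> nat \<Rightarrow> nat \<Rightarrow> nat \<Rightarrow> complex" where
  "block d2 X i j a b = X (a + i * d2) (b + j * d2)"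

definition reduced1 :: "nat \<Rightarrow> (nat \<Rightarrow> nat \<Rightarrow> complex) \<Rightarrow> nat \<Rightarrow> nat \<Rightarrow> complex" where
  "reduced1 d2 X i j = mtrace d2 (block d2 X i j)"

definition reduced2 :: "nat \<Rightarrow> nat \<Rightarrow> (nat \<Rightarrow> nat \<Rightarrow> complex) \<Rightarrow> nat \<Rightarrow> nat \<Rightarrow> complex" where
  "reduced2 d1 d2 X a b = (\<Sum>i<d1. block d2 X i i a b)"

lemma index_pair_less: "a < d2 \<Longrightarrow> i < d1 \<Longrightarrow> a + i * d2 < d1 * (d2::nat)"
proof -
  assume "a < d2" "i < d1"
  then have "a + i * d2 < Suc i * d2" by simp
  also have "\<dots> \<le> d1 * d2" using \<open>i < d1\<close> by (intro mult_le_mono1) simp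
  finally show ?thesis .
qed

lemma frobenius_sq_gram:
  assumes "\<forall>r<n. \<forall>c<n. A r c = (\<Sum>k<m. x k r * cnj (x k c))"
  shows "frobenius_sq n A = (\<Sum>k<m. \<Sum>l<m. (cmod (\<Sum>r<n. x k r * cnj (x l r)))\<^sup>2)"
proof -
  have "frobenius_sq n A = (\<Sum>r<n. \<Sum>c<n. (cmod (\<Sum>k<m. x k r * cnj (x k c)))\<^sup>2)"
    unfolding frobenius_sq_def using assms by simp
  also have "\<dots> = (\<Sum>k<m. \<Sum>l<m. (cmod (\<Sum>r<n. x k r * cnj (x l r)))\<^sup>2)"
    by (rule sum_norm_sq_gram_swap)
  finally show ?thesis .
qed

lemma frobenius_sq_le_trace_sq:
  assumes "hermitian n A" "pos_semidef n A"
  shows "frobenius_sq n A \<le> (cmod (mtrace n A))\<^sup>2"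
proof -
  obtain x where x: "\<forall>r<n. \<forall>c<n. A r c = (\<Sum>k<n. x k r * cnj (x k c))"
    using gram_factorization[OF assms] by blast
  have "mtrace n A = (\<Sum>r<n. \<Sum>k<n. x k r * cnj (x k r))"
    unfolding mtrace_def using x by simp
  also have "\<dots> = of_real (\<Sum>k<n. \<Sum>r<n. (cmod (x k r))\<^sup>2)"
    unfolding of_real_sum complex_norm_square by (rule sum.swap)
  finally have "mtrace n A = of_real (\<Sum>k<n. \<Sum>r<n. (cmod (x k r))\<^sup>2)" .
  then have "cmod (mtrace n A) = (\<Sum>k<n. \<Sum>r<n. (cmod (x k r))\<^sup>2)"
    by (simp only: norm_of_real) (rule abs_of_nonneg, simp add: sum_nonneg)
  then show ?thesis
    using sum_norm_sq_gram_le_sq[of x "{..<n}" "{..<n}"] by (simp add: frobenius_sq_gram[OF x])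
qed

lemma frobenius_sq_le_reduced2:
  assumes "hermitian (d1 * d2) A" "pos_semidef (d1 * d2) A"
  shows "frobenius_sq (d1 * d2) A \<le> d1 * frobenius_sq d2 (reduced2 d1 d2 A)"
proof -
  obtain x where x: "\<forall>r<d1 * d2. \<forall>c<d1 * d2. A r c = (\<Sum>k<d1 * d2. x k r * cnj (x k c))"
    using gram_factorization[OF assms] by blast
  have "reduced2 d1 d2 A a b = (\<Sum>i<d1. \<Sum>k<d1 * d2. x k (a + i * d2) * cnj (x k (b + i * d2)))"
    if "a < d2" "b < d2" for a b
    unfolding reduced2_def block_def
    using x index_pair_less that by (intro sum.cong refl) simp
  then have reduced: "frobenius_sq d2 (reduced2 d1 d2 A)
      = (\<Sum>a<d2. \<Sum>b<d2. (cmod (\<Sum>i<d1. \<Sum>k<d1 * d2. x k (a + i * d2) * cnj (x k (b + i * d2))))\<^sup>2)"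
    unfolding frobenius_sq_def by (intro sum.cong refl) simp
  have "frobenius_sq (d1 * d2) A
      = (\<Sum>k<d1 * d2. \<Sum>l<d1 * d2. (cmod (\<Sum>i<d1. \<Sum>a<d2. x k (a + i * d2) * cnj (x l (a + i * d2))))\<^sup>2)"
    unfolding frobenius_sq_gram[OF x] sum_mult_product ..
  also have "\<dots> \<le> card {..<d1} * (\<Sum>a<d2. \<Sum>b<d2.
      (cmod (\<Sum>i<d1. \<Sum>k<d1 * d2. x k (a + i * d2) * cnj (x k (b + i * d2))))\<^sup>2)"
    by (rule sum_norm_sq_gram_le_partial[where x = "\<lambda>k i a. x k (a + i * d2)"]) simp
  finally show ?thesis unfolding reduced by simp
qed

lemma frobenius_sq_le_reduced1:
  assumes "hermitian (d1 * d2) A" "pos_semidef (d1 * d2) A"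
  shows "frobenius_sq (d1 * d2) A \<le> d2 * frobenius_sq d1 (reduced1 d2 A)"
proof -
  obtain x where x: "\<forall>r<d1 * d2. \<forall>c<d1 * d2. A r c = (\<Sum>k<d1 * d2. x k r * cnj (x k c))"
    using gram_factorization[OF assms] by blast
  have "reduced1 d2 A i j = (\<Sum>a<d2. \<Sum>k<d1 * d2. x k (a + i * d2) * cnj (x k (a + j * d2)))"
    if "i < d1" "j < d1" for i j
    unfolding reduced1_def block_def mtrace_def
    using x index_pair_less that by (intro sum.cong refl) simp
  then have reduced: "frobenius_sq d1 (reduced1 d2 A)
      = (\<Sum>i<d1. \<Sum>j<d1. (cmod (\<Sum>a<d2. \<Sum>k<d1 * d2. x k (a + i * d2) * cnj (x k (a + j * d2))))\<^sup>2)"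
    unfolding frobenius_sq_def by (intro sum.cong refl) simp
  have inner: "(\<Sum>r<d1 * d2. x k r * cnj (x l r)) = (\<Sum>a<d2. \<Sum>i<d1. x k (a + i * d2) * cnj (x l (a + i * d2)))"
    for k l unfolding sum_mult_product by (rule sum.swap)
  have "frobenius_sq (d1 * d2) A
      = (\<Sum>k<d1 * d2. \<Sum>l<d1 * d2. (cmod (\<Sum>a<d2. \<Sum>i<d1. x k (a + i * d2) * cnj (x l (a + i * d2))))\<^sup>2)"
    unfolding frobenius_sq_gram[OF x] inner ..
  also have "\<dots> \<le> card {..<d2} * (\<Sum>i<d1. \<Sum>j<d1.
      (cmod (\<Sum>a<d2. \<Sum>k<d1 * d2. x k (a + i * d2) * cnj (x k (a + j * d2))))\<^sup>2)"
    by (rule sum_norm_sq_gram_le_partial[where x = "\<lambda>k a i. x k (a + i * d2)"]) simp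
  finally show ?thesis unfolding reduced by simp
qed

section \<open>Parseval identities for the correlation tensor\<close>

lemma primitive_root_norm: "primitive_root d w \<Longrightarrow> 0 < d \<Longrightarrow> cmod w = 1"
  unfolding primitive_root_def using power_eq_1_iff by blast

lemma primitive_root_power_inj:
  assumes w: "primitive_root d w" and "m < d" "m' < d" and eq: "w ^ m = w ^ m'"
  shows "m = m'"
proof -
  have "w \<noteq> 0" using primitive_root_norm[OF w] \<open>m < d\<close> by auto
  have "False" if "k < k'" "k' < d" "w ^ k = w ^ k'" for k k'
  proof -
    have "w ^ k * w ^ (k' - k) = w ^ k'" using \<open>k < k'\<close> by (simp flip: power_add)
    then have "w ^ k * w ^ (k' - k) = w ^ k * 1" using \<open>w ^ k = w ^ k'\<close> by simp
    then have "w ^ (k' - k) = 1" using \<open>w \<noteq> 0\<close> by simp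
    then show False using w that unfolding primitive_root_def by auto
  qed
  then show ?thesis using assms by (metis linorder_neqE_nat)
qed

lemma primitive_root_character_sum:
  assumes w: "primitive_root d w" and "m < d" "m' < d"
  shows "(\<Sum>i<d. cnj (w ^ (i * m)) * w ^ (i * m')) = (if m = m' then of_nat d else 0)"
proof -
  have "cmod w = 1" using primitive_root_norm[OF w] \<open>m < d\<close> by simp
  then have cw: "cnj w * w = 1" using complex_norm_square[of w] by (simp add: mult.commute)
  define q where "q = cnj (w ^ m) * w ^ m'"
  have q_pow: "cnj (w ^ (i * m)) * w ^ (i * m') = q ^ i" for i
    by (simp add: q_def power_mult_distrib mult.commute[of i] power_mult)
  show ?thesis
  proof (cases "m = m'")
    case True
    then have "q = 1" by (simp add: q_def flip: power_mult_distrib add: cw)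
    then show ?thesis using True unfolding q_pow by simp
  next
    case False
    have "w ^ m * q = (cnj w * w) ^ m * w ^ m'" by (simp add: q_def power_mult_distrib mult_ac)
    then have "w ^ m' = w ^ m * q" using cw by simp
    then have "q \<noteq> 1" using primitive_root_power_inj[OF w \<open>m < d\<close> \<open>m' < d\<close>] False by auto
    moreover have "q ^ d = 1"
    proof -
      have "(w ^ k) ^ d = 1" for k
        using w unfolding primitive_root_def by (metis power_mult mult.commute power_one)
      moreover have "q ^ d = cnj ((w ^ m) ^ d) * (w ^ m') ^ d"
        by (simp only: q_def power_mult_distrib complex_cnj_power)
      ultimately show ?thesis by simp
    qed
    ultimately show ?thesis using False geometric_sum[of q d] unfolding q_pow by simp
  qed
qed

lemma mod_shift_eq_iff:
  fixes d m n j :: nat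
  assumes "m \<le> d" "n < d" "j < d"
  shows "n = (m + j) mod d \<longleftrightarrow> j = (n + (d - m)) mod d"
proof
  assume "n = (m + j) mod d"
  then have "(n + (d - m)) mod d = (m + j + (d - m)) mod d" by (simp add: mod_add_left_eq)
  also have "m + j + (d - m) = j + d" using assms by simp
  finally show "j = (n + (d - m)) mod d" using assms by simp
next
  assume "j = (n + (d - m)) mod d"
  then have "(m + j) mod d = (m + (n + (d - m))) mod d" by (simp add: mod_add_right_eq)
  also have "m + (n + (d - m)) = n + d" using assms by simp
  finally show "n = (m + j) mod d" using assms by simp
qed

lemma gpauli_decompose:
  assumes "j < d" "m < d" "n < d"
  shows "gpauli d w (j + i * d) m n = (if j = (n + (d - m)) mod d then w ^ (i * m) else 0)"
  using assms mod_shift_eq_iff[of m d n j] by (simp add: gpauli_def)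

lemma gpauli_zero: "i < d \<Longrightarrow> j < d \<Longrightarrow> gpauli d w 0 i j = (if i = j then 1 else 0)"
  by (simp add: gpauli_def)

definition hs_inner :: "nat \<Rightarrow> (nat \<Rightarrow> nat \<Rightarrow> complex) \<Rightarrow> (nat \<Rightarrow> nat \<Rightarrow> complex) \<Rightarrow> complex" where
  "hs_inner n X B = (\<Sum>r<n. \<Sum>c<n. X r c * cnj (B r c))"

text \<open>Up to the factor N, this completeness relation says that the B u form an orthonormal
  basis (more generally a tight frame) for the Hilbert-Schmidt inner product.\<close>
definition tight_frame :: "'u set \<Rightarrow> nat \<Rightarrow> ('u \<Rightarrow> nat \<Rightarrow> nat \<Rightarrow> complex) \<Rightarrow> real \<Rightarrow> bool" where
  "tight_frame U n B N \<longleftrightarrow> (\<forall>r<n. \<forall>c<n. \<forall>r'<n. \<forall>c'<n.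
     (\<Sum>u\<in>U. cnj (B u r c) * B u r' c') = (if r = r' \<and> c = c' then of_real N else 0))"

lemma tight_frame_gpauli:
  assumes w: "primitive_root d w"
  shows "tight_frame {..<d\<^sup>2} d (gpauli d w) d"
  unfolding tight_frame_def
proof (intro allI impI)
  fix m n m' n' assume mn: "m < d" "n < d" "m' < d" "n' < d"
  define s where "s = (\<lambda>m n. (n + (d - m)) mod d)"
  have s_lt: "s m n < d" using mn by (simp add: s_def)
  have "(\<Sum>u\<in>{..<d\<^sup>2}. cnj (gpauli d w u m n) * gpauli d w u m' n')
      = (\<Sum>i<d. \<Sum>j<d. cnj (gpauli d w (j + i * d) m n) * gpauli d w (j + i * d) m' n')"
    by (simp add: power2_eq_square sum_mult_product)
  also have "\<dots> = (\<Sum>i<d. \<Sum>j<d. if j = s m n then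
      (if s m n = s m' n' then cnj (w ^ (i * m)) * w ^ (i * m') else 0) else 0)"
    using mn by (intro sum.cong refl) (auto simp: gpauli_decompose s_def)
  also have "\<dots> = (if s m n = s m' n' then \<Sum>i<d. cnj (w ^ (i * m)) * w ^ (i * m') else 0)"
    using s_lt by simp
  also have "\<dots> = (if m = m' \<and> n = n' then of_real d else 0)"
    using primitive_root_character_sum[OF w mn(1,3)] mod_shift_eq_iff[of m d _ "s m n"] mn s_lt
    by (auto simp: s_def)
  finally show "(\<Sum>u\<in>{..<d\<^sup>2}. cnj (gpauli d w u m n) * gpauli d w u m' n')
      = (if m = m' \<and> n = n' then of_real d else 0)" .
qed

lemma tight_frame_kron:
  assumes A: "tight_frame U1 d1 A N1" and B: "tight_frame U2 d2 B N2"
  shows "tight_frame (U1 \<times> U2) (d1 * d2) (\<lambda>(u1, u2). kron d1 d2 (A u1) (B u2)) (N1 * N2)"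
  unfolding tight_frame_def
proof (intro allI impI)
  fix r c r' c' assume rc: "r < d1 * d2" "c < d1 * d2" "r' < d1 * d2" "c' < d1 * d2"
  then have div: "r div d2 < d1" "c div d2 < d1" "r' div d2 < d1" "c' div d2 < d1"
    by (simp_all add: less_mult_imp_div_less mult.commute)
  have "0 < d2" using rc by (cases d2) auto
  then have mod: "r mod d2 < d2" "c mod d2 < d2" "r' mod d2 < d2" "c' mod d2 < d2"
    by simp_all
  have eq_iff: "x = y \<longleftrightarrow> x div d2 = y div d2 \<and> x mod d2 = y mod d2" for x y :: nat
    by (metis div_mult_mod_eq)
  have "(\<Sum>u\<in>U1 \<times> U2. cnj ((case u of (u1, u2) \<Rightarrow> kron d1 d2 (A u1) (B u2)) r c)
          * (case u of (u1, u2) \<Rightarrow> kron d1 d2 (A u1) (B u2)) r' c')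
      = (\<Sum>u1\<in>U1. cnj (A u1 (r div d2) (c div d2)) * A u1 (r' div d2) (c' div d2))
        * (\<Sum>u2\<in>U2. cnj (B u2 (r mod d2) (c mod d2)) * B u2 (r' mod d2) (c' mod d2))"
    using rc by (simp add: kron_def sum_product sum.cartesian_product' mult_ac)
  also have "\<dots> = (if r = r' \<and> c = c' then of_real (N1 * N2) else 0)"
    using A B div mod unfolding tight_frame_def eq_iff[of r] eq_iff[of c] by auto
  finally show "(\<Sum>u\<in>U1 \<times> U2. cnj ((case u of (u1, u2) \<Rightarrow> kron d1 d2 (A u1) (B u2)) r c)
          * (case u of (u1, u2) \<Rightarrow> kron d1 d2 (A u1) (B u2)) r' c')
      = (if r = r' \<and> c = c' then of_real (N1 * N2) else 0)" .
qed

lemma parseval_identity: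
  assumes "finite I"
    and frame: "\<And>p q. p \<in> I \<Longrightarrow> q \<in> I \<Longrightarrow>
      (\<Sum>u\<in>U. cnj (B u p) * B u q) = (if p = q then of_real N else 0)"
  shows "(\<Sum>u\<in>U. (cmod (\<Sum>p\<in>I. X p * cnj (B u p)))\<^sup>2) = N * (\<Sum>p\<in>I. (cmod (X p))\<^sup>2)"
proof -
  have "complex_of_real (\<Sum>u\<in>U. (cmod (\<Sum>p\<in>I. X p * cnj (B u p)))\<^sup>2)
      = (\<Sum>u\<in>U. (\<Sum>p\<in>I. X p * cnj (B u p)) * cnj (\<Sum>q\<in>I. X q * cnj (B u q)))"
    by (simp only: of_real_sum complex_norm_square)
  also have "\<dots> = (\<Sum>u\<in>U. \<Sum>p\<in>I. \<Sum>q\<in>I. X p * cnj (X q) * (cnj (B u p) * B u q))"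
    by (simp add: cnj_sum sum_product mult_ac)
  also have "\<dots> = (\<Sum>p\<in>I. \<Sum>q\<in>I. \<Sum>u\<in>U. X p * cnj (X q) * (cnj (B u p) * B u q))"
    by (subst sum.swap) (simp only: sum.swap[of _ U])
  also have "\<dots> = (\<Sum>p\<in>I. \<Sum>q\<in>I. X p * cnj (X q) * (if p = q then of_real N else 0))"
    using frame by (intro sum.cong refl) (simp flip: sum_distrib_left)
  also have "\<dots> = complex_of_real (N * (\<Sum>p\<in>I. (cmod (X p))\<^sup>2))"
    using \<open>finite I\<close> by (simp add: if_distrib[of "times _"] sum_distrib_left complex_norm_square mult_ac
        del: of_real_power cong: if_cong)
  finally show ?thesis by (simp only: of_real_eq_iff)
qed

lemma tight_frame_parseval:
  assumes "tight_frame U n B N"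
  shows "(\<Sum>u\<in>U. (cmod (hs_inner n X (B u)))\<^sup>2) = N * frobenius_sq n X"
proof -
  have "(\<Sum>u\<in>U. (cmod (\<Sum>p\<in>{..<n} \<times> {..<n}. X (fst p) (snd p) * cnj (B u (fst p) (snd p))))\<^sup>2)
      = N * (\<Sum>p\<in>{..<n} \<times> {..<n}. (cmod (X (fst p) (snd p)))\<^sup>2)"
  proof (rule parseval_identity)
    fix p q assume "p \<in> {..<n} \<times> {..<n}" "q \<in> {..<n} \<times> {..<n}"
    then show "(\<Sum>u\<in>U. cnj (B u (fst p) (snd p)) * B u (fst q) (snd q))
        = (if p = q then of_real N else 0)"
      using assms by (cases p, cases q) (simp add: tight_frame_def)
  qed simp
  then show ?thesis by (simp add: hs_inner_def frobenius_sq_def sum.cartesian_product')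
qed

lemma kron_adj: "kron d1 d2 (adj A) (adj B) = adj (kron d1 d2 A B)"
  by (simp add: fun_eq_iff kron_def adj_def)

lemma mtrace_mmult_adj: "mtrace n (mmult n X (adj B)) = hs_inner n X B"
  by (simp add: mtrace_def mmult_def adj_def hs_inner_def)

lemma corr_eq_hs_inner:
  "corr d1 d2 w1 w2 \<rho> u1 u2 = hs_inner (d1 * d2) \<rho> (kron d1 d2 (gpauli d1 w1 u1) (gpauli d2 w2 u2))"
  by (simp add: corr_def kron_adj mtrace_mmult_adj)

lemma kron_block_entry:
  assumes "a < d2" "i < d1" "b < d2" "j < d1"
  shows "kron d1 d2 A B (a + i * d2) (b + j * d2) = A i j * B a b"
  using assms index_pair_less[OF assms(1,2)] index_pair_less[OF assms(3,4)] by (simp add: kron_def)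

lemma hs_inner_kron:
  "hs_inner (d1 * d2) X (kron d1 d2 A B) = (\<Sum>i<d1. \<Sum>j<d1. cnj (A i j) * hs_inner d2 (block d2 X i j) B)"
proof -
  have "hs_inner (d1 * d2) X (kron d1 d2 A B)
      = (\<Sum>i<d1. \<Sum>a<d2. \<Sum>j<d1. \<Sum>b<d2. cnj (A i j) * (block d2 X i j a b * cnj (B a b)))"
    unfolding hs_inner_def sum_mult_product
    by (intro sum.cong refl) (simp add: kron_block_entry block_def mult_ac)
  also have "\<dots> = (\<Sum>i<d1. \<Sum>j<d1. \<Sum>a<d2. \<Sum>b<d2. cnj (A i j) * (block d2 X i j a b * cnj (B a b)))"
    by (rule sum.cong[OF refl]) (rule sum.swap)
  finally show ?thesis by (simp add: hs_inner_def sum_distrib_left)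
qed

lemma hs_inner_sum_left: "hs_inner n (\<lambda>r c. \<Sum>i\<in>S. Y i r c) B = (\<Sum>i\<in>S. hs_inner n (Y i) B)"
  unfolding hs_inner_def sum_distrib_right by (simp only: sum.swap[of _ "{..<n}" S])

lemma hs_inner_identity:
  assumes "\<And>i j. i < n \<Longrightarrow> j < n \<Longrightarrow> I i j = (if i = j then 1 else 0)"
  shows "hs_inner n X I = mtrace n X"
  unfolding hs_inner_def mtrace_def
proof (rule sum.cong[OF refl])
  fix r assume "r \<in> {..<n}"
  then have "(\<Sum>c<n. X r c * cnj (I r c)) = (\<Sum>c<n. X r c * (if c = r then 1 else 0))"
    by (intro sum.cong refl) (auto simp: assms)
  also have "\<dots> = X r r" using \<open>r \<in> {..<n}\<close> by (simp add: sum_mult_delta_right)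
  finally show "(\<Sum>c<n. X r c * cnj (I r c)) = X r r" .
qed

lemma hs_inner_kron_identity_left:
  assumes "\<And>i j. i < d1 \<Longrightarrow> j < d1 \<Longrightarrow> I i j = (if i = j then 1 else 0)"
  shows "hs_inner (d1 * d2) X (kron d1 d2 I B) = hs_inner d2 (reduced2 d1 d2 X) B"
proof -
  have "hs_inner (d1 * d2) X (kron d1 d2 I B) = (\<Sum>i<d1. hs_inner d2 (block d2 X i i) B)"
    unfolding hs_inner_kron
  proof (rule sum.cong[OF refl])
    fix i assume "i \<in> {..<d1}"
    then have "(\<Sum>j<d1. cnj (I i j) * hs_inner d2 (block d2 X i j) B)
        = (\<Sum>j<d1. (if j = i then 1 else 0) * hs_inner d2 (block d2 X i j) B)"
      by (intro sum.cong refl) (auto simp: assms)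
    also have "\<dots> = hs_inner d2 (block d2 X i i) B"
      using \<open>i \<in> {..<d1}\<close> by (simp add: sum_delta_mult_left)
    finally show "(\<Sum>j<d1. cnj (I i j) * hs_inner d2 (block d2 X i j) B) = hs_inner d2 (block d2 X i i) B" .
  qed
  also have "\<dots> = hs_inner d2 (reduced2 d1 d2 X) B"
    using hs_inner_sum_left[of d2 "\<lambda>i. block d2 X i i" "{..<d1}" B]
    by (simp add: reduced2_def[abs_def])
  finally show ?thesis .
qed

lemma hs_inner_kron_identity_right:
  assumes "\<And>a b. a < d2 \<Longrightarrow> b < d2 \<Longrightarrow> I a b = (if a = b then 1 else 0)"
  shows "hs_inner (d1 * d2) X (kron d1 d2 A I) = hs_inner d1 (reduced1 d2 X) A"
proof -
  have "hs_inner d2 (block d2 X i j) I = reduced1 d2 X i j" for i j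
    unfolding reduced1_def using assms by (rule hs_inner_identity)
  then show ?thesis unfolding hs_inner_kron by (simp add: hs_inner_def mult.commute)
qed

lemma mtrace_reduced2: "mtrace d2 (reduced2 d1 d2 X) = mtrace (d1 * d2) X"
  unfolding mtrace_def reduced2_def block_def sum_mult_product by (rule sum.swap)

lemma corr_zero_left: "corr d1 d2 w1 w2 \<rho> 0 u2 = hs_inner d2 (reduced2 d1 d2 \<rho>) (gpauli d2 w2 u2)"
  unfolding corr_eq_hs_inner by (rule hs_inner_kron_identity_left) (simp add: gpauli_zero)

lemma corr_zero_right: "corr d1 d2 w1 w2 \<rho> u1 0 = hs_inner d1 (reduced1 d2 \<rho>) (gpauli d1 w1 u1)"
  unfolding corr_eq_hs_inner by (rule hs_inner_kron_identity_right) (simp add: gpauli_zero)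

lemma corr_zero_zero: "corr d1 d2 w1 w2 \<rho> 0 0 = mtrace (d1 * d2) \<rho>"
  by (simp add: corr_zero_left hs_inner_identity gpauli_zero mtrace_reduced2)

lemma corr_parseval:
  assumes "primitive_root d1 w1" "primitive_root d2 w2"
  shows "(\<Sum>u1<d1\<^sup>2. \<Sum>u2<d2\<^sup>2. (cmod (corr d1 d2 w1 w2 \<rho> u1 u2))\<^sup>2)
    = real (d1 * d2) * frobenius_sq (d1 * d2) \<rho>"
  using tight_frame_parseval[OF tight_frame_kron[OF tight_frame_gpauli[OF assms(1)]
      tight_frame_gpauli[OF assms(2)]], of \<rho>]
  by (simp add: corr_eq_hs_inner sum.cartesian_product')

lemma corr_zero_left_parseval:
  assumes "primitive_root d2 w2"
  shows "(\<Sum>u2<d2\<^sup>2. (cmod (corr d1 d2 w1 w2 \<rho> 0 u2))\<^sup>2) = real d2 * frobenius_sq d2 (reduced2 d1 d2 \<rho>)"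
  using tight_frame_parseval[OF tight_frame_gpauli[OF assms]] by (simp add: corr_zero_left)

lemma corr_zero_right_parseval:
  assumes "primitive_root d1 w1"
  shows "(\<Sum>u1<d1\<^sup>2. (cmod (corr d1 d2 w1 w2 \<rho> u1 0))\<^sup>2) = real d1 * frobenius_sq d1 (reduced1 d2 \<rho>)"
  using tight_frame_parseval[OF tight_frame_gpauli[OF assms]] by (simp add: corr_zero_right)

lemma sum_off_axes:
  fixes f :: "nat \<Rightarrow> nat \<Rightarrow> 'a::ab_group_add"
  assumes "0 < m" "0 < n"
  shows "(\<Sum>i\<in>{1..<m}. \<Sum>j\<in>{1..<n}. f i j)
    = (\<Sum>i<m. \<Sum>j<n. f i j) - (\<Sum>j<n. f 0 j) - (\<Sum>i<m. f i 0) + f 0 0"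
proof -
  have split: "(\<Sum>i<k. g i) = g 0 + (\<Sum>i\<in>{1..<k}. g i)" if "0 < k" for k and g :: "nat \<Rightarrow> 'a"
    using that by (simp add: atLeast0LessThan[symmetric] sum.atLeast_Suc_lessThan)
  show ?thesis
    using assms by (simp add: split[of m] split[of n] sum.distrib algebra_simps)
qed

lemma correlation_bound_arith:
  fixes a b F F1 F2 :: real
  assumes "2 \<le> a" "2 \<le> b" and "F \<le> a * F2" "F \<le> b * F1" "F \<le> 1"
  shows "a * b * F - b * F2 - a * F1 + 1 \<le> a * b * (1 - 1 / a\<^sup>2 - 1 / b\<^sup>2) + 1"
proof -
  have coeff: "a * b * (1 - 1 / a\<^sup>2 - 1 / b\<^sup>2) = a * b - b / a - a / b"
    using assms(1,2) by (simp add: field_simps power2_eq_square)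
  have "0 \<le> (a - 2) * (b - 2)" using assms(1,2) by simp
  then have "a + b \<le> a * b" using assms(1,2) by (simp add: algebra_simps)
  moreover have "b / a \<le> b / 2" "a / b \<le> a / 2"
    using assms(1,2) by (intro divide_left_mono; simp)+
  ultimately have nonneg: "0 \<le> a * b - b / a - a / b" using assms(1,2) by linarith
  have "b / a * F \<le> b * F2" "a / b * F \<le> a * F1"
    using assms by (simp_all add: field_simps)
  then have "a * b * F - b * F2 - a * F1 \<le> a * b * F - b / a * F - a / b * F" by linarith
  also have "\<dots> = (a * b - b / a - a / b) * F" by (simp add: left_diff_distrib)
  also have "\<dots> \<le> a * b - b / a - a / b"
    using mult_left_mono[OF assms(5) nonneg] by simp
  finally show ?thesis using coeff by linarith
qed

theorem lemma2:
  fixes d1 d2 :: nat and w1 w2 :: complex and \<rho> :: "nat \<Rightarrow> nat \<Rightarrow> complex"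
  assumes "d1 \<ge> 2" and "d2 \<ge> 2"
    and "primitive_root d1 w1" and "primitive_root d2 w2"
    and "density_op (d1 * d2) \<rho>"
  shows "(\<Sum>u1\<in>{1..<d1^2}. \<Sum>u2\<in>{1..<d2^2}. (cmod (corr d1 d2 w1 w2 \<rho> u1 u2))^2)
           \<le> real (d1 * d2) * (1 - 1 / real d1 ^ 2 - 1 / real d2 ^ 2) + 1"
proof -
  have H: "hermitian (d1 * d2) \<rho>" and P: "pos_semidef (d1 * d2) \<rho>" and tr: "mtrace (d1 * d2) \<rho> = 1"
    using assms(5) by (simp_all add: density_op_iff)
  let ?t = "\<lambda>u1 u2. (cmod (corr d1 d2 w1 w2 \<rho> u1 u2))^2"
  have "(\<Sum>u1\<in>{1..<d1^2}. \<Sum>u2\<in>{1..<d2^2}. ?t u1 u2)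
      = (\<Sum>u1<d1^2. \<Sum>u2<d2^2. ?t u1 u2) - (\<Sum>u2<d2^2. ?t 0 u2) - (\<Sum>u1<d1^2. ?t u1 0) + ?t 0 0"
    using assms(1,2) by (intro sum_off_axes) simp_all
  also have "\<dots> = real d1 * real d2 * frobenius_sq (d1 * d2) \<rho> - real d2 * frobenius_sq d2 (reduced2 d1 d2 \<rho>)
        - real d1 * frobenius_sq d1 (reduced1 d2 \<rho>) + 1"
    by (simp add: corr_parseval[OF assms(3,4)] corr_zero_left_parseval[OF assms(4)]
        corr_zero_right_parseval[OF assms(3)] corr_zero_zero tr)
  also have "\<dots> \<le> real d1 * real d2 * (1 - 1 / real d1 ^ 2 - 1 / real d2 ^ 2) + 1"
    using assms(1,2) frobenius_sq_le_reduced2[OF H P] frobenius_sq_le_reduced1[OF H P]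
      frobenius_sq_le_trace_sq[OF H P] tr
    by (intro correlation_bound_arith) simp_all
  finally show ?thesis by simp
qed

end
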